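(* Let $N\to\infty$, let $n=n(N)\ge 2$ be an integer, and let $p=p(N)$ satisfy $p N^2\to\infty$ (i.e. $\frac{1}{N^2}\ll p$) and $p\le \frac1N$. Then asymptotically almost surely $\mathrm{ex}(G(N,p),P_{n+1})=\Theta(pN^2)$, i.e. there are absolute constants $c_1,c_2>0$ such that a.a.s. $c_1pN^2\le \mathrm{ex}(G(N,p),P_{n+1})\le c_2pN^2$. In particular, a.a.s. $\mathrm{ex}(G(N,1/N),P_{n+1})\ge N/15$.
   Context: $G(N,p)$ denotes the Erdős–Rényi random graph on vertex set $[N]=\{1,\dots,N\}$ in which each pair is an edge independently with probability $p$. $P_k$ denotes the path on $k$ vertices. For graphs $G,F$, $\mathrm{ex}(G,F)$ is the maximum number of edges in an $F$-free subgraph of $G$. An event holds asymptotically almost surely (a.a.s.) if its probability tends to $1$ as $N\to\infty$. *)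

theory Defs
  imports "HOL-Analysis.Analysis"
begin

text \<open>Graphs on vertex set [N] = {1..N} are given by their edge sets: sets of
  2-element subsets of {1..N}.\<close>

definition all_edges :: "nat \<Rightarrow> nat set set" where
  "all_edges N = {e. e \<subseteq> {1..N} \<and> card e = 2}"

definition gnp_prob :: "nat \<Rightarrow> real \<Rightarrow> (nat set set \<Rightarrow> bool) \<Rightarrow> real" where
  "gnp_prob N p P =
     (\<Sum>E\<in>Pow (all_edges N).
        if P E then p ^ card E * (1 - p) ^ (card (all_edges N) - card E) else 0)"

definition contains_path :: "nat set set \<Rightarrow> nat \<Rightarrow> bool" where
  "contains_path H k \<longleftrightarrow>
     (\<exists>vs. length vs = k \<and> distinct vs \<and> (\<forall>i. i + 1 < k \<longrightarrow> {vs ! i, vs ! (i + 1)} \<in> H))"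

definition ex_path :: "nat set set \<Rightarrow> nat \<Rightarrow> nat" where
  "ex_path E k = Max {card H | H. H \<subseteq> E \<and> \<not> contains_path H k}"

end

theory Submission
  imports Defs
begin

text \<open>The upper bound is \<open>ex(G, P\<^sub>n\<^sub>+\<^sub>1) \<le> e(G)\<close>, and \<open>e(G)\<close> concentrates around \<open>N\<^sup>2p/2\<close>.
  For the lower bound, restrict \<open>G\<close> to a set \<open>A\<close> of \<open>m \<approx> 2N/3\<close> vertices and delete one
  edge of every cherry (path on three vertices) of \<open>G[A]\<close>: the result has no \<open>P\<^sub>3\<close>, hence no
  \<open>P\<^sub>n\<^sub>+\<^sub>1\<close>, and at least \<open>e(G[A]) - #cherries(G[A])\<close> edges. These counts have means
  about \<open>m\<^sup>2p/2\<close> and at most \<open>m\<^sup>3p\<^sup>2/2 \<le> m\<^sup>2p/3\<close> (as \<open>mp \<le> 2/3\<close>), and since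
  \<open>p \<le> 1/N\<close> all three counts have variance \<open>O(pN\<^sup>2)\<close>. Chebyshev's inequality then bounds
  the failure probability by \<open>O(1/(pN\<^sup>2))\<close>.\<close>

section \<open>Expectations in \<open>G(N,p)\<close>\<close>

lemma finite_all_edges: "finite (all_edges N)"
  unfolding all_edges_def by (rule finite_subset[of _ "Pow {1..N}"]) auto

definition gnp_expect :: "nat \<Rightarrow> real \<Rightarrow> (nat set set \<Rightarrow> real) \<Rightarrow> real" where
  "gnp_expect N p f =
     (\<Sum>E\<in>Pow (all_edges N). p ^ card E * (1 - p) ^ (card (all_edges N) - card E) * f E)"

lemma gnp_prob_eq_expect: "gnp_prob N p P = gnp_expect N p (\<lambda>E. if P E then 1 else 0)"
  unfolding gnp_prob_def gnp_expect_def by (rule sum.cong) auto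

lemma sum_Pow_power_card:
  fixes p q :: "'a :: comm_semiring_1"
  assumes "finite V"
  shows "(\<Sum>F\<in>Pow V. p ^ card F * q ^ (card V - card F)) = (p + q) ^ card V"
proof -
  have "(p + q) ^ card V = (\<Prod>x\<in>V. p + q)" by simp
  also have "\<dots> = (\<Sum>F\<in>Pow V. (\<Prod>x\<in>F. p) * (\<Prod>x\<in>V - F. q))"
    by (rule prod_add[OF assms])
  also have "\<dots> = (\<Sum>F\<in>Pow V. p ^ card F * q ^ (card V - card F))"
    using assms by (intro sum.cong refl) (simp add: card_Diff_subset finite_subset)
  finally show ?thesis by simp
qed

lemma Pow_supersets_eq_image:
  assumes "S \<subseteq> U"
  shows "{E\<in>Pow U. S \<subseteq> E} = (\<lambda>F. F \<union> S) ` Pow (U - S)"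
proof (intro equalityI subsetI)
  fix E assume "E \<in> {E\<in>Pow U. S \<subseteq> E}"
  then have "E - S \<in> Pow (U - S)" "E = (E - S) \<union> S" by auto
  then show "E \<in> (\<lambda>F. F \<union> S) ` Pow (U - S)" by (rule rev_image_eqI)
qed (use assms in auto)

lemma gnp_expect_subset_indicator:
  assumes S: "S \<subseteq> all_edges N"
  shows "gnp_expect N p (\<lambda>E. if S \<subseteq> E then 1 else 0) = p ^ card S"
proof -
  let ?U = "all_edges N"
  let ?V = "?U - S"
  let ?w = "\<lambda>E. p ^ card E * (1 - p) ^ (card ?U - card E)"
  have fU: "finite ?U" by (rule finite_all_edges)
  have fS: "finite S" using S fU finite_subset by blast
  have fV: "finite ?V" using fU by simp
  have "gnp_expect N p (\<lambda>E. if S \<subseteq> E then 1 else 0) = (\<Sum>E\<in>Pow ?U. if S \<subseteq> E then ?w E else 0)"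
    unfolding gnp_expect_def by (intro sum.cong) auto
  also have "\<dots> = (\<Sum>E\<in>{E\<in>Pow ?U. S \<subseteq> E}. ?w E)"
    by (rule sum.inter_filter[symmetric]) (simp add: fU)
  also have "{E\<in>Pow ?U. S \<subseteq> E} = (\<lambda>F. F \<union> S) ` Pow ?V"
    by (rule Pow_supersets_eq_image[OF S])
  also have "(\<Sum>E\<in>(\<lambda>F. F \<union> S) ` Pow ?V. ?w E) = (\<Sum>F\<in>Pow ?V. ?w (F \<union> S))"
    by (subst sum.reindex) (auto simp: inj_on_def)
  also have "\<dots> = (\<Sum>F\<in>Pow ?V. p ^ card S * (p ^ card F * (1 - p) ^ (card ?V - card F)))"
  proof (rule sum.cong)
    fix F assume F: "F \<in> Pow ?V"
    have fF: "finite F" using F fV finite_subset by auto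
    have card_FS: "card (F \<union> S) = card F + card S"
      using F fF fS by (subst card_Un_disjoint) auto
    have "card ?V = card ?U - card S" using S fS by (simp add: card_Diff_subset)
    moreover have "card F \<le> card ?V" "card S \<le> card ?U"
      using F fV S fU by (simp_all add: card_mono)
    ultimately have "card ?U - card (F \<union> S) = card ?V - card F" using card_FS by simp
    then show "?w (F \<union> S) = p ^ card S * (p ^ card F * (1 - p) ^ (card ?V - card F))"
      using card_FS by (simp add: power_add)
  qed simp
  also have "\<dots> = p ^ card S"
    by (simp add: sum_distrib_left[symmetric] sum_Pow_power_card[OF fV])
  finally show ?thesis .
qed

lemma gnp_expect_add: "gnp_expect N p (\<lambda>E. f E + g E) = gnp_expect N p f + gnp_expect N p g"
  unfolding gnp_expect_def by (simp add: algebra_simps sum.distrib)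

lemma gnp_expect_cmult: "gnp_expect N p (\<lambda>E. c * f E) = c * gnp_expect N p f"
  unfolding gnp_expect_def by (simp add: sum_distrib_left algebra_simps)

lemma gnp_expect_diff: "gnp_expect N p (\<lambda>E. f E - g E) = gnp_expect N p f - gnp_expect N p g"
  unfolding gnp_expect_def by (simp add: algebra_simps sum_subtractf)

lemma gnp_expect_sum:
  "finite I \<Longrightarrow> gnp_expect N p (\<lambda>E. \<Sum>i\<in>I. f i E) = (\<Sum>i\<in>I. gnp_expect N p (f i))"
  unfolding gnp_expect_def by (simp add: sum_distrib_left sum.swap[of _ I])

lemma gnp_expect_const: "gnp_expect N p (\<lambda>E. c) = c"
  using gnp_expect_subset_indicator[of "{}" N p] gnp_expect_cmult[of N p c "\<lambda>E. 1"] by simp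

lemma gnp_expect_mono:
  assumes "0 \<le> p" "p \<le> 1" "\<And>E. E \<subseteq> all_edges N \<Longrightarrow> f E \<le> g E"
  shows "gnp_expect N p f \<le> gnp_expect N p g"
  unfolding gnp_expect_def using assms by (intro sum_mono mult_left_mono) auto

lemma gnp_prob_mono:
  assumes "0 \<le> p" "p \<le> 1" "\<And>E. E \<subseteq> all_edges N \<Longrightarrow> P E \<Longrightarrow> Q E"
  shows "gnp_prob N p P \<le> gnp_prob N p Q"
  unfolding gnp_prob_eq_expect using assms by (intro gnp_expect_mono) auto

lemma gnp_prob_le_1:
  assumes "0 \<le> p" "p \<le> 1"
  shows "gnp_prob N p P \<le> 1"
  using gnp_prob_mono[OF assms, of N P "\<lambda>E. True"]
  by (simp add: gnp_prob_eq_expect gnp_expect_const)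

lemma gnp_prob_compl: "gnp_prob N p (\<lambda>E. \<not> P E) = 1 - gnp_prob N p P"
proof -
  have "gnp_prob N p P + gnp_prob N p (\<lambda>E. \<not> P E) = gnp_expect N p (\<lambda>E. 1)"
    unfolding gnp_prob_eq_expect gnp_expect_add[symmetric]
    by (rule arg_cong[where f="gnp_expect N p"]) auto
  then show ?thesis by (simp add: gnp_expect_const)
qed

lemma gnp_prob_disj_le:
  assumes "0 \<le> p" "p \<le> 1"
  shows "gnp_prob N p (\<lambda>E. P E \<or> Q E) \<le> gnp_prob N p P + gnp_prob N p Q"
  unfolding gnp_prob_eq_expect gnp_expect_add[symmetric] using assms by (intro gnp_expect_mono) auto

lemma gnp_markov_inequality:
  assumes "0 \<le> p" "p \<le> 1" "t > 0" "\<And>E. E \<subseteq> all_edges N \<Longrightarrow> f E \<ge> 0"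
  shows "gnp_prob N p (\<lambda>E. t \<le> f E) \<le> gnp_expect N p f / t"
proof -
  have "gnp_prob N p (\<lambda>E. t \<le> f E) \<le> gnp_expect N p (\<lambda>E. (1 / t) * f E)"
    unfolding gnp_prob_eq_expect using assms by (intro gnp_expect_mono) (auto simp: field_simps)
  then show ?thesis using gnp_expect_cmult[of N p "1 / t" f] by simp
qed

lemma gnp_chebyshev_inequality:
  assumes "0 \<le> p" "p \<le> 1" "t > 0"
  shows "gnp_prob N p (\<lambda>E. t \<le> \<bar>f E - \<mu>\<bar>) \<le> gnp_expect N p (\<lambda>E. (f E - \<mu>)\<^sup>2) / t\<^sup>2"
proof -
  have "gnp_prob N p (\<lambda>E. t \<le> \<bar>f E - \<mu>\<bar>) \<le> gnp_prob N p (\<lambda>E. t\<^sup>2 \<le> (f E - \<mu>)\<^sup>2)"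
  proof (rule gnp_prob_mono)
    fix E assume "t \<le> \<bar>f E - \<mu>\<bar>"
    then have "t\<^sup>2 \<le> \<bar>f E - \<mu>\<bar>\<^sup>2" using assms by (intro power_mono) auto
    then show "t\<^sup>2 \<le> (f E - \<mu>)\<^sup>2" by simp
  qed (use assms in auto)
  also have "\<dots> \<le> gnp_expect N p (\<lambda>E. (f E - \<mu>)\<^sup>2) / t\<^sup>2"
    using assms by (intro gnp_markov_inequality) auto
  finally show ?thesis .
qed

section \<open>Second moments of subgraph counts\<close>

lemma real_card_filter_eq_sum_indicator:
  "finite I \<Longrightarrow> real (card {i\<in>I. P i}) = (\<Sum>i\<in>I. if P i then 1 else 0)"
  by (simp add: sum.If_cases Int_def)

lemma gnp_expect_count_sq_deviation:
  assumes I: "finite I" and S: "\<And>i. i \<in> I \<Longrightarrow> S i \<subseteq> all_edges N"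
  shows "gnp_expect N p (\<lambda>E. (real (card {i\<in>I. S i \<subseteq> E}) - (\<Sum>i\<in>I. p ^ card (S i)))\<^sup>2)
    = (\<Sum>i\<in>I. \<Sum>j\<in>I. p ^ card (S i \<union> S j) - p ^ card (S i) * p ^ card (S j))"
proof -
  define \<mu> where "\<mu> = (\<Sum>i\<in>I. p ^ card (S i))"
  define X where "X = (\<lambda>E. real (card {i\<in>I. S i \<subseteq> E}))"
  have X_eq: "X E = (\<Sum>i\<in>I. if S i \<subseteq> E then 1 else 0)" for E
    unfolding X_def by (rule real_card_filter_eq_sum_indicator[OF I])
  have EX: "gnp_expect N p X = \<mu>"
    unfolding X_eq \<mu>_def by (simp add: gnp_expect_sum[OF I] gnp_expect_subset_indicator S)
  have X_sq: "(X E)\<^sup>2 = (\<Sum>i\<in>I. \<Sum>j\<in>I. if S i \<union> S j \<subseteq> E then 1 else 0)" for E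
    unfolding X_eq power2_eq_square sum_product by (intro sum.cong refl) auto
  have EX2: "gnp_expect N p (\<lambda>E. (X E)\<^sup>2) = (\<Sum>i\<in>I. \<Sum>j\<in>I. p ^ card (S i \<union> S j))"
    unfolding X_sq gnp_expect_sum[OF I]
    by (intro sum.cong refl gnp_expect_subset_indicator) (use S in auto)
  have "(\<lambda>E. (X E - \<mu>)\<^sup>2) = (\<lambda>E. (X E)\<^sup>2 - (2 * \<mu> * X E - \<mu>\<^sup>2))"
    by (auto simp: power2_eq_square algebra_simps)
  then have "gnp_expect N p (\<lambda>E. (X E - \<mu>)\<^sup>2)
      = gnp_expect N p (\<lambda>E. (X E)\<^sup>2) - (2 * \<mu> * gnp_expect N p X - \<mu>\<^sup>2)"
    by (simp only: gnp_expect_diff gnp_expect_cmult gnp_expect_const)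
  also have "\<dots> = (\<Sum>i\<in>I. \<Sum>j\<in>I. p ^ card (S i \<union> S j)) - \<mu>\<^sup>2"
    using EX EX2 by (simp add: power2_eq_square)
  also have "\<mu>\<^sup>2 = (\<Sum>i\<in>I. \<Sum>j\<in>I. p ^ card (S i) * p ^ card (S j))"
    unfolding \<mu>_def power2_eq_square sum_product ..
  finally show ?thesis unfolding X_def \<mu>_def by (simp add: sum_subtractf)
qed

text \<open>Pairs of disjoint edge sets are independent, so only overlapping pairs contribute.\<close>

lemma gnp_expect_count_sq_deviation_le:
  assumes I: "finite I" and S: "\<And>i. i \<in> I \<Longrightarrow> S i \<subseteq> all_edges N" and p: "0 \<le> p"
  shows "gnp_expect N p (\<lambda>E. (real (card {i\<in>I. S i \<subseteq> E}) - (\<Sum>i\<in>I. p ^ card (S i)))\<^sup>2)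
    \<le> (\<Sum>i\<in>I. \<Sum>j\<in>I. if S i \<inter> S j = {} then 0 else p ^ card (S i \<union> S j))"
proof -
  have "p ^ card (S i \<union> S j) - p ^ card (S i) * p ^ card (S j)
      \<le> (if S i \<inter> S j = {} then 0 else p ^ card (S i \<union> S j))" if "i \<in> I" "j \<in> I" for i j
  proof -
    have "finite (S i)" "finite (S j)"
      using S that finite_all_edges finite_subset by blast+
    then show ?thesis using p by (auto simp: card_Un_disjoint power_add)
  qed
  then show ?thesis
    by (subst gnp_expect_count_sq_deviation[OF I S]) (auto intro!: sum_mono)
qed

lemma gnp_expect_edge_count_sq_deviation_le:
  assumes F: "F \<subseteq> all_edges N" and p: "0 \<le> p"
  shows "gnp_expect N p (\<lambda>E. (real (card (E \<inter> F)) - real (card F) * p)\<^sup>2) \<le> real (card F) * p"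
proof -
  have fF: "finite F" using F finite_all_edges finite_subset by blast
  have Fe: "\<And>e. e \<in> F \<Longrightarrow> {e} \<subseteq> all_edges N" using F by auto
  have count: "card {e\<in>F. {e} \<subseteq> E} = card (E \<inter> F)" for E
    by (rule arg_cong[where f=card]) auto
  have "gnp_expect N p (\<lambda>E. (real (card (E \<inter> F)) - real (card F) * p)\<^sup>2)
      \<le> (\<Sum>e\<in>F. \<Sum>e'\<in>F. if {e} \<inter> {e'} = {} then 0 else p ^ card ({e} \<union> {e'}))"
    using gnp_expect_count_sq_deviation_le[where S="\<lambda>e. {e}", OF fF Fe p] unfolding count by simp
  also have "\<dots> = (\<Sum>e\<in>F. \<Sum>e'\<in>F. if e' = e then p else 0)"
    by (intro sum.cong refl) auto
  also have "\<dots> = real (card F) * p" using fF by (simp add: sum.delta)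
  finally show ?thesis .
qed

definition edges_on :: "nat set \<Rightarrow> nat set set" where
  "edges_on A = {e. e \<subseteq> A \<and> card e = 2}"

lemma all_edges_eq_edges_on: "all_edges N = edges_on {1..N}"
  unfolding all_edges_def edges_on_def by simp

lemma edges_on_subset_all_edges: "A \<subseteq> {1..N} \<Longrightarrow> edges_on A \<subseteq> all_edges N"
  unfolding edges_on_def all_edges_def by auto

lemma finite_edges_on: "finite A \<Longrightarrow> finite (edges_on A)"
  unfolding edges_on_def by (rule finite_subset[of _ "Pow A"]) auto

lemma card_edges_on: "finite A \<Longrightarrow> card (edges_on A) = card A choose 2"
  unfolding edges_on_def by (rule n_subsets)

text \<open>A cherry \<open>(v, {a, b})\<close> is the path \<open>a v b\<close> with centre \<open>v\<close>.\<close>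

definition cherries :: "nat set \<Rightarrow> (nat \<times> nat set) set" where
  "cherries A = (SIGMA v:A. edges_on (A - {v}))"

definition cherry_edges :: "nat \<times> nat set \<Rightarrow> nat set set" where
  "cherry_edges c = (\<lambda>t. {fst c, t}) ` snd c"

lemma finite_cherries: "finite A \<Longrightarrow> finite (cherries A)"
  unfolding cherries_def by (auto intro: finite_edges_on)

lemma card_cherries: "finite A \<Longrightarrow> card (cherries A) = card A * (card A - 1 choose 2)"
  unfolding cherries_def by (simp add: finite_edges_on card_edges_on)

lemma mem_cherriesD:
  "c \<in> cherries A \<Longrightarrow> fst c \<in> A \<and> snd c \<subseteq> A \<and> fst c \<notin> snd c \<and> card (snd c) = 2"
  unfolding cherries_def edges_on_def by auto

lemma cherry_edges_subset_edges_on: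
  assumes "c \<in> cherries A"
  shows "cherry_edges c \<subseteq> edges_on A"
  using mem_cherriesD[OF assms] unfolding cherry_edges_def edges_on_def
  by (auto simp: card_insert_if)

lemma card_cherry_edges:
  assumes "c \<in> cherries A"
  shows "card (cherry_edges c) = 2"
proof -
  have "inj_on (\<lambda>t. {fst c, t}) (snd c)"
    using mem_cherriesD[OF assms] by (auto simp: inj_on_def doubleton_eq_iff)
  then show ?thesis unfolding cherry_edges_def using mem_cherriesD[OF assms] by (simp add: card_image)
qed

lemma finite_cherry_edges: "c \<in> cherries A \<Longrightarrow> finite (cherry_edges c)"
  using card_cherry_edges by (metis card.infinite zero_neq_numeral)

lemma inj_on_cherry_edges: "inj_on cherry_edges (cherries A)"
proof
  fix c c' assume c: "c \<in> cherries A" and c': "c' \<in> cherries A"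
    and eq: "cherry_edges c = cherry_edges c'"
  obtain v T v' T' where cs: "c = (v, T)" "c' = (v', T')" by fastforce
  from mem_cherriesD[OF c] obtain a b where T: "T = {a, b}" "a \<noteq> b" "v \<noteq> a" "v \<noteq> b"
    unfolding cs by (auto simp: card_2_iff)
  from mem_cherriesD[OF c'] obtain a' b' where T': "T' = {a', b'}" "a' \<noteq> b'" "v' \<noteq> a'" "v' \<noteq> b'"
    unfolding cs by (auto simp: card_2_iff)
  have eq': "{{v, a}, {v, b}} = {{v', a'}, {v', b'}}"
    using eq unfolding cs cherry_edges_def T T' by simp
  have "v = v'"
    using arg_cong[OF eq', of Inter] T T' by auto
  moreover have "T = T'"
    using arg_cong[OF eq', of "\<lambda>X. \<Union>X - {v}"] T T' \<open>v = v'\<close> by auto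
  ultimately show "c = c'" using cs by simp
qed

text \<open>A cherry meeting \<open>c\<close> is determined by an edge \<open>e\<close> of \<open>c\<close>, an endpoint \<open>v'\<close> of \<open>e\<close>
  (its centre) and its third vertex \<open>z\<close>.\<close>

lemma card_cherries_meeting_le:
  assumes A: "finite A" and c: "c \<in> cherries A"
  shows "card {c'\<in>cherries A. cherry_edges c \<inter> cherry_edges c' \<noteq> {}} \<le> 4 * card A"
proof -
  let ?D = "(SIGMA e:cherry_edges c. e) \<times> A"
  let ?f = "\<lambda>((e, v'), z). (v', (e - {v'}) \<union> {z})"
  have card_e: "card e = 2" if "e \<in> cherry_edges c" for e
    using cherry_edges_subset_edges_on[OF c] that unfolding edges_on_def by auto
  have fS: "finite (cherry_edges c)" by (rule finite_cherry_edges[OF c])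
  have fe: "finite e" if "e \<in> cherry_edges c" for e
    using card_e[OF that] by (metis card.infinite zero_neq_numeral)
  have "card (SIGMA e:cherry_edges c. e) = (\<Sum>e\<in>cherry_edges c. card e)" using fS fe by simp
  also have "\<dots> = 4" using card_e card_cherry_edges[OF c] by simp
  finally have card_D: "card ?D = 4 * card A" by (simp add: card_cartesian_product)
  have "{c'\<in>cherries A. cherry_edges c \<inter> cherry_edges c' \<noteq> {}} \<subseteq> ?f ` ?D"
  proof
    fix c' assume "c' \<in> {c'\<in>cherries A. cherry_edges c \<inter> cherry_edges c' \<noteq> {}}"
    then have c': "c' \<in> cherries A" and meet: "cherry_edges c \<inter> cherry_edges c' \<noteq> {}" by auto
    obtain v' T' where cs: "c' = (v', T')" by fastforce
    from meet obtain e where e: "e \<in> cherry_edges c" "e \<in> cherry_edges c'" by auto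
    then obtain w where w: "w \<in> T'" "e = {v', w}" unfolding cherry_edges_def cs by auto
    from mem_cherriesD[OF c'] have T': "T' \<subseteq> A" "v' \<notin> T'" "card T' = 2" unfolding cs by auto
    obtain z where z: "T' = {w, z}"
      using T'(3) w(1) by (metis card_2_iff insert_commute singletonD insertE)
    have "e - {v'} = {w}" using w T'(2) by auto
    then have "?f ((e, v'), z) = c'" using cs z by auto
    moreover have "((e, v'), z) \<in> ?D" using e w z T'(1) by auto
    ultimately show "c' \<in> ?f ` ?D" by force
  qed
  then have "card {c'\<in>cherries A. cherry_edges c \<inter> cherry_edges c' \<noteq> {}} \<le> card (?f ` ?D)"
    by (intro card_mono) (auto intro!: finite_imageI simp: fS fe A)
  also have "\<dots> \<le> card ?D" by (rule card_image_le) (auto simp: fS fe A)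
  finally show ?thesis using card_D by simp
qed

lemma card_cherry_edges_Un_ge_3:
  assumes c: "c \<in> cherries A" and c': "c' \<in> cherries A" and "c \<noteq> c'"
  shows "3 \<le> card (cherry_edges c \<union> cherry_edges c')"
proof -
  have fin: "finite (cherry_edges c)" "finite (cherry_edges c')"
    using finite_cherry_edges c c' by blast+
  have "card (cherry_edges c \<union> cherry_edges c') \<noteq> 2"
  proof
    assume two: "card (cherry_edges c \<union> cherry_edges c') = 2"
    have "cherry_edges c = cherry_edges c \<union> cherry_edges c'"
      using fin two card_cherry_edges[OF c] by (intro card_subset_eq) auto
    moreover have "cherry_edges c' = cherry_edges c \<union> cherry_edges c'"
      using fin two card_cherry_edges[OF c'] by (intro card_subset_eq) auto
    ultimately have "cherry_edges c = cherry_edges c'" by simp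
    then have "c = c'" by (rule inj_onD[OF inj_on_cherry_edges _ c c'])
    with \<open>c \<noteq> c'\<close> show False by simp
  qed
  moreover have "card (cherry_edges c) \<le> card (cherry_edges c \<union> cherry_edges c')"
    using fin by (intro card_mono) auto
  ultimately show ?thesis using card_cherry_edges[OF c] by simp
qed

lemma gnp_expect_cherry_count_sq_deviation_le:
  assumes A: "finite A" "A \<subseteq> {1..N}" and p: "0 \<le> p" "p \<le> 1"
  shows "gnp_expect N p
      (\<lambda>E. (real (card {c\<in>cherries A. cherry_edges c \<subseteq> E}) - real (card (cherries A)) * p\<^sup>2)\<^sup>2)
    \<le> real (card (cherries A)) * (p\<^sup>2 + 4 * real (card A) * p ^ 3)"
proof -
  have S: "\<And>c. c \<in> cherries A \<Longrightarrow> cherry_edges c \<subseteq> all_edges N"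
    using cherry_edges_subset_edges_on edges_on_subset_all_edges[OF A(2)] by blast
  have fin: "finite (cherries A)" by (rule finite_cherries[OF A(1)])
  have mu: "(\<Sum>c\<in>cherries A. p ^ card (cherry_edges c)) = real (card (cherries A)) * p\<^sup>2"
    by (simp add: card_cherry_edges)
  have "gnp_expect N p
      (\<lambda>E. (real (card {c\<in>cherries A. cherry_edges c \<subseteq> E}) - real (card (cherries A)) * p\<^sup>2)\<^sup>2)
    \<le> (\<Sum>c\<in>cherries A. \<Sum>c'\<in>cherries A. if cherry_edges c \<inter> cherry_edges c' = {} then 0
          else p ^ card (cherry_edges c \<union> cherry_edges c'))"
    using gnp_expect_count_sq_deviation_le[where S=cherry_edges, OF fin S p(1)] unfolding mu .
  also have "\<dots> \<le> (\<Sum>c\<in>cherries A. p\<^sup>2 + 4 * real (card A) * p ^ 3)"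
  proof (rule sum_mono)
    fix c assume c: "c \<in> cherries A"
    let ?D = "{c'\<in>cherries A. cherry_edges c \<inter> cherry_edges c' \<noteq> {}}"
    have "(\<Sum>c'\<in>cherries A. if cherry_edges c \<inter> cherry_edges c' = {} then 0
          else p ^ card (cherry_edges c \<union> cherry_edges c'))
        = (\<Sum>c'\<in>?D. p ^ card (cherry_edges c \<union> cherry_edges c'))"
      using fin by (simp add: sum.If_cases Int_def Collect_neg_eq[symmetric] cong: conj_cong)
    also have "\<dots> \<le> (\<Sum>c'\<in>?D. (if c' = c then p\<^sup>2 else 0) + p ^ 3)"
    proof (rule sum_mono)
      fix c' assume "c' \<in> ?D"
      then have c': "c' \<in> cherries A" by simp
      show "p ^ card (cherry_edges c \<union> cherry_edges c') \<le> (if c' = c then p\<^sup>2 else 0) + p ^ 3"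
      proof (cases "c' = c")
        case True
        then show ?thesis using card_cherry_edges[OF c] p by simp
      next
        case False
        then have "p ^ card (cherry_edges c \<union> cherry_edges c') \<le> p ^ 3"
          using card_cherry_edges_Un_ge_3[OF c c'] p by (intro power_decreasing) auto
        then show ?thesis using False by simp
      qed
    qed
    also have "\<dots> = p\<^sup>2 + real (card ?D) * p ^ 3"
    proof -
      have "c \<in> ?D" using c card_cherry_edges[OF c] by auto
      then have "(\<Sum>c'\<in>?D. if c' = c then p\<^sup>2 else 0) = p\<^sup>2"
        using fin by (simp add: sum.delta)
      then show ?thesis by (simp add: sum.distrib)
    qed
    also have "\<dots> \<le> p\<^sup>2 + 4 * real (card A) * p ^ 3"
      using card_cherries_meeting_le[OF A(1) c] p by (simp add: mult_right_mono)
    finally show "(\<Sum>c'\<in>cherries A. if cherry_edges c \<inter> cherry_edges c' = {} then 0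
          else p ^ card (cherry_edges c \<union> cherry_edges c')) \<le> p\<^sup>2 + 4 * real (card A) * p ^ 3" .
  qed
  also have "\<dots> = real (card (cherries A)) * (p\<^sup>2 + 4 * real (card A) * p ^ 3)" by simp
  finally show ?thesis .
qed

lemma gnp_prob_edge_count_deviation_le:
  assumes F: "F \<subseteq> all_edges N" and p: "0 \<le> p" "p \<le> 1" and t: "t > 0"
  shows "gnp_prob N p (\<lambda>E. t \<le> \<bar>real (card (E \<inter> F)) - real (card F) * p\<bar>) \<le> real (card F) * p / t\<^sup>2"
proof -
  have "gnp_prob N p (\<lambda>E. t \<le> \<bar>real (card (E \<inter> F)) - real (card F) * p\<bar>)
      \<le> gnp_expect N p (\<lambda>E. (real (card (E \<inter> F)) - real (card F) * p)\<^sup>2) / t\<^sup>2"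
    by (rule gnp_chebyshev_inequality[OF p t])
  also have "\<dots> \<le> real (card F) * p / t\<^sup>2"
    by (intro divide_right_mono gnp_expect_edge_count_sq_deviation_le[OF F p(1)]) simp
  finally show ?thesis .
qed

lemma gnp_prob_cherry_count_deviation_le:
  assumes A: "finite A" "A \<subseteq> {1..N}" and p: "0 \<le> p" "p \<le> 1" and t: "t > 0"
  shows "gnp_prob N p
      (\<lambda>E. t \<le> \<bar>real (card {c\<in>cherries A. cherry_edges c \<subseteq> E}) - real (card (cherries A)) * p\<^sup>2\<bar>)
    \<le> real (card (cherries A)) * (p\<^sup>2 + 4 * real (card A) * p ^ 3) / t\<^sup>2"
proof -
  have "gnp_prob N p
      (\<lambda>E. t \<le> \<bar>real (card {c\<in>cherries A. cherry_edges c \<subseteq> E}) - real (card (cherries A)) * p\<^sup>2\<bar>)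
    \<le> gnp_expect N p
      (\<lambda>E. (real (card {c\<in>cherries A. cherry_edges c \<subseteq> E}) - real (card (cherries A)) * p\<^sup>2)\<^sup>2) / t\<^sup>2"
    by (rule gnp_chebyshev_inequality[OF p t])
  also have "\<dots> \<le> real (card (cherries A)) * (p\<^sup>2 + 4 * real (card A) * p ^ 3) / t\<^sup>2"
    by (intro divide_right_mono gnp_expect_cherry_count_sq_deviation_le[OF A p]) simp
  finally show ?thesis .
qed

section \<open>Path-free subgraphs\<close>

lemma card_le_ex_path:
  assumes "finite E" "H \<subseteq> E" "\<not> contains_path H k"
  shows "card H \<le> ex_path E k"
  unfolding ex_path_def
proof (rule Max_ge)
  have "{card H |H. H \<subseteq> E \<and> \<not> contains_path H k} \<subseteq> card ` Pow E" by auto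
  then show "finite {card H |H. H \<subseteq> E \<and> \<not> contains_path H k}"
    using assms(1) finite_subset by blast
qed (use assms in auto)

lemma not_contains_path_empty:
  assumes "2 \<le> k"
  shows "\<not> contains_path {} k"
proof
  assume "contains_path {} k"
  then obtain vs where "\<forall>i. i + 1 < k \<longrightarrow> {vs ! i, vs ! (i + 1)} \<in> ({} :: nat set set)"
    unfolding contains_path_def by blast
  from this[rule_format, of 0] show False using assms by simp
qed

lemma ex_path_le_card:
  assumes "finite E" "2 \<le> k"
  shows "ex_path E k \<le> card E"
  unfolding ex_path_def
proof (rule Max.boundedI)
  have "{card H |H. H \<subseteq> E \<and> \<not> contains_path H k} \<subseteq> card ` Pow E" by auto
  then show "finite {card H |H. H \<subseteq> E \<and> \<not> contains_path H k}"
    using assms(1) finite_subset by blast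
  show "{card H |H. H \<subseteq> E \<and> \<not> contains_path H k} \<noteq> {}"
    using not_contains_path_empty[OF assms(2)] by blast
qed (use assms in \<open>auto intro: card_mono\<close>)

lemma contains_path_obtains_two_adjacent_edges:
  assumes "contains_path H k" "3 \<le> k"
  obtains x y z where "x \<noteq> y" "y \<noteq> z" "x \<noteq> z" "{x, y} \<in> H" "{y, z} \<in> H"
proof -
  obtain vs where vs: "length vs = k" "distinct vs" "\<And>i. i + 1 < k \<Longrightarrow> {vs ! i, vs ! (i + 1)} \<in> H"
    using assms(1) unfolding contains_path_def by blast
  have "{vs ! 0, vs ! 1} \<in> H" "{vs ! 1, vs ! 2} \<in> H"
    using vs(3)[of 0] vs(3)[of 1] assms(2) by (simp_all add: numeral_2_eq_2)
  moreover have "vs ! 0 \<noteq> vs ! 1" "vs ! 1 \<noteq> vs ! 2" "vs ! 0 \<noteq> vs ! 2"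
    using vs(1,2) assms(2) by (auto simp: nth_eq_iff_index_eq)
  ultimately show ?thesis using that by blast
qed

text \<open>Deleting from \<open>E \<inter> edges_on A\<close> the edge from the centre to the smaller leaf of every
  cherry of \<open>E\<close> in \<open>A\<close> leaves a graph without a path on three vertices.\<close>

lemma edges_minus_cherries_le_ex_path:
  assumes E: "finite E" and k: "3 \<le> k" and A: "finite A"
  shows "card (E \<inter> edges_on A) - card {c\<in>cherries A. cherry_edges c \<subseteq> E} \<le> ex_path E k"
proof -
  define B where "B = {c\<in>cherries A. cherry_edges c \<subseteq> E}"
  define g where "g c = {fst c, Min (snd c)}" for c :: "nat \<times> nat set"
  define H where "H = (E \<inter> edges_on A) - g ` B"
  have fB: "finite B" unfolding B_def using finite_cherries[OF A] by simp
  have "card (E \<inter> edges_on A) - card B \<le> card (E \<inter> edges_on A) - card (g ` B)"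
    using card_image_le[OF fB, of g] by linarith
  also have "\<dots> \<le> card H" unfolding H_def by (rule diff_card_le_card_Diff) (use fB in simp)
  also have "card H \<le> ex_path E k"
  proof (rule card_le_ex_path[OF E])
    show "H \<subseteq> E" unfolding H_def by auto
    show "\<not> contains_path H k"
    proof
      assume "contains_path H k"
      then obtain x y z where xyz: "x \<noteq> y" "y \<noteq> z" "x \<noteq> z" and edges: "{x, y} \<in> H" "{y, z} \<in> H"
        using contains_path_obtains_two_adjacent_edges k by blast
      have "x \<in> A" "y \<in> A" "z \<in> A" using edges unfolding H_def edges_on_def by auto
      then have "(y, {x, z}) \<in> B"
        using edges xyz unfolding B_def H_def cherries_def cherry_edges_def edges_on_def
        by (auto simp: insert_commute)
      moreover have "g (y, {x, z}) = {x, y} \<or> g (y, {x, z}) = {y, z}"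
        unfolding g_def by (auto simp: min_def insert_commute)
      ultimately show False using edges unfolding H_def by auto
    qed
  qed
  finally show ?thesis unfolding B_def .
qed

lemma real_choose_two: "real (n choose 2) = real n * (real n - 1) / 2"
proof (induction n)
  case (Suc n)
  have "Suc n choose 2 = (n choose 2) + n" by (simp add: numeral_2_eq_2)
  then show ?case using Suc by (simp add: field_simps)
qed simp

lemma real_card_cherries_le: "finite A \<Longrightarrow> real (card (cherries A)) \<le> real (card A) ^ 3 / 2"
proof -
  assume A: "finite A"
  let ?m = "real (card A)"
  show ?thesis
  proof (cases "card A \<le> 1")
    case True
    then show ?thesis using A by (simp add: card_cherries numeral_2_eq_2)
  next
    case False
    then have "real (card (cherries A)) = ?m * ((?m - 1) * (?m - 2)) / 2"
      using A by (simp add: card_cherries real_choose_two of_nat_diff algebra_simps)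
    also have "\<dots> \<le> ?m * (?m * ?m) / 2"
      using False by (intro divide_right_mono mult_left_mono mult_mono) auto
    finally show ?thesis by (simp add: power3_eq_cube)
  qed
qed

section \<open>Concentration for fixed \<open>N\<close>\<close>

lemma edges_minus_cherries_margin:
  fixes m n p :: real
  assumes n: "175 \<le> n" and m: "(2 * n - 2) / 3 \<le> m" "m \<le> 2 * n / 3" and p: "0 \<le> p" "p * n \<le> 1"
  shows "p * n\<^sup>2 / 15 \<le> m * (m - 1) * p / 2 - m ^ 3 * p\<^sup>2 / 2 - 2 * (p * n\<^sup>2 / 540)"
proof -
  have "m * p \<le> (2 * n / 3) * p" using m p by (intro mult_right_mono) auto
  also have "\<dots> \<le> 2 / 3" using p by (simp add: mult.commute)
  finally have mp: "m * p \<le> 2 / 3" .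
  have "m ^ 3 * p\<^sup>2 / 2 = (m\<^sup>2 * p / 2) * (m * p)" by (simp add: power2_eq_square power3_eq_cube)
  also have "\<dots> \<le> (m\<^sup>2 * p / 2) * (2 / 3)" using mp m n p by (intro mult_left_mono) auto
  finally have cherries: "m ^ 3 * p\<^sup>2 / 2 \<le> m\<^sup>2 * p / 3" by simp
  have "((2 * n - 2) / 3)\<^sup>2 \<le> m\<^sup>2" using m n by (intro power_mono) auto
  moreover have "((2 * n - 2) / 3)\<^sup>2 = (4 * n\<^sup>2 - 8 * n + 4) / 9" by (simp add: power2_eq_square field_simps)
  moreover have "0 \<le> n * (n - 130)" using n by simp
  ultimately have "19 * n\<^sup>2 / 270 \<le> m\<^sup>2 / 6 - m / 2"
    using m by (simp add: power2_eq_square field_simps)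
  then have "p * (19 * n\<^sup>2 / 270) \<le> p * (m\<^sup>2 / 6 - m / 2)" using p by (intro mult_left_mono) auto
  then show ?thesis using cherries by (simp add: field_simps power2_eq_square)
qed

lemma le_mult_imp_div_square_le:
  fixes V c x d :: real
  assumes "V \<le> c * x"
  shows "V / (x / d)\<^sup>2 \<le> c * d\<^sup>2 / x"
proof (cases "x = 0 \<or> d = 0")
  case False
  then have "V / (x / d)\<^sup>2 \<le> c * x / (x / d)\<^sup>2" using assms by (intro divide_right_mono) auto
  also have "\<dots> = c * d\<^sup>2 / x" using False by (simp add: field_simps power2_eq_square)
  finally show ?thesis .
qed auto

text \<open>The lower-bound construction lives on the first \<open>2N/3\<close> vertices: on all of \<open>[N]\<close> the
  expected number \<open>N\<^sup>3p\<^sup>2/2\<close> of cherries would cancel the \<open>N\<^sup>2p/2\<close> edges when \<open>p = 1/N\<close>.\<close>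

definition core_vertices :: "nat \<Rightarrow> nat set" where
  "core_vertices N = {1..2 * N div 3}"

lemma card_core_vertices: "card (core_vertices N) = 2 * N div 3"
  unfolding core_vertices_def by simp

lemma finite_core_vertices: "finite (core_vertices N)"
  unfolding core_vertices_def by simp

lemma core_vertices_subset: "core_vertices N \<subseteq> {1..N}"
  unfolding core_vertices_def by auto

context
  fixes N :: nat and p :: real
  assumes N_ge: "175 \<le> N" and p_pos: "0 < p" and p_le: "p \<le> 1 / real N"
begin

lemma p_times_N_le_1: "p * real N \<le> 1"
  using p_le N_ge by (simp add: field_simps)

lemma p_le_1: "p \<le> 1"
proof -
  have "1 / real N \<le> 1" using N_ge by simp
  then show ?thesis using p_le by linarith
qed

lemma expected_edges_le: "real (card (all_edges N)) * p \<le> p * real N ^ 2 / 2"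
proof -
  have "real (card (all_edges N)) \<le> real N ^ 2 / 2"
    by (simp add: all_edges_eq_edges_on card_edges_on real_choose_two power2_eq_square field_simps)
  then show ?thesis using p_pos by (simp add: mult.commute mult_left_mono)
qed

lemma expected_core_edges_le: "real (card (edges_on (core_vertices N))) * p \<le> p * real N ^ 2"
proof -
  let ?m = "real (2 * N div 3)"
  have "?m * (?m - 1) / 2 \<le> ?m * ?m" by (simp add: field_simps)
  also have "\<dots> \<le> real N ^ 2" unfolding power2_eq_square by (intro mult_mono) auto
  finally have "?m * (?m - 1) / 2 \<le> real N ^ 2" .
  then show ?thesis using p_pos
    by (simp add: card_edges_on finite_core_vertices card_core_vertices real_choose_two
        mult.commute mult_left_mono)
qed

lemma cherry_variance_le:
  "real (card (cherries (core_vertices N))) * (p\<^sup>2 + 4 * real (card (core_vertices N)) * p ^ 3)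
    \<le> 5 * (p * real N ^ 2)"
proof -
  let ?m = "real (card (core_vertices N))"
  have m_le: "?m \<le> real N" by (simp add: card_core_vertices)
  have "?m * p \<le> real N * p" using m_le p_pos by (intro mult_right_mono) auto
  then have "p\<^sup>2 * (4 * (?m * p)) \<le> p\<^sup>2 * 4"
    using p_times_N_le_1 by (intro mult_left_mono) (auto simp: mult.commute)
  then have variance_factor: "p\<^sup>2 + 4 * ?m * p ^ 3 \<le> 5 * p\<^sup>2"
    by (simp add: power2_eq_square power3_eq_cube algebra_simps)
  have "real (card (cherries (core_vertices N))) \<le> ?m ^ 3 / 2"
    by (rule real_card_cherries_le[OF finite_core_vertices])
  also have "\<dots> \<le> real N ^ 3" using power_mono[OF m_le, of 3] zero_le_power[of ?m 3] by linarith
  finally have "real (card (cherries (core_vertices N))) * (p\<^sup>2 + 4 * ?m * p ^ 3)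
      \<le> real N ^ 3 * (5 * p\<^sup>2)"
    using variance_factor p_pos by (intro mult_mono) auto
  also have "\<dots> = 5 * (p * real N ^ 2) * (p * real N)"
    by (simp add: power2_eq_square power3_eq_cube)
  also have "\<dots> \<le> 5 * (p * real N ^ 2)"
    using p_times_N_le_1 p_pos by (simp add: mult_left_le)
  finally show ?thesis .
qed

lemma ex_path_bounds_if_counts_typical:
  assumes E: "E \<subseteq> all_edges N" and k: "3 \<le> k"
    and edges: "\<bar>real (card (E \<inter> all_edges N)) - real (card (all_edges N)) * p\<bar> < p * real N ^ 2 / 2"
    and core_edges: "\<bar>real (card (E \<inter> edges_on (core_vertices N)))
        - real (card (edges_on (core_vertices N))) * p\<bar> < p * real N ^ 2 / 540"
    and core_cherries: "\<bar>real (card {c\<in>cherries (core_vertices N). cherry_edges c \<subseteq> E})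
        - real (card (cherries (core_vertices N))) * p\<^sup>2\<bar> < p * real N ^ 2 / 540"
  shows "p * real N ^ 2 / 15 \<le> real (ex_path E k) \<and> real (ex_path E k) \<le> p * real N ^ 2"
proof
  let ?A = "core_vertices N"
  let ?m = "real (card ?A)"
  have fE: "finite E" using E finite_all_edges finite_subset by blast
  have "real (ex_path E k) \<le> real (card E)" using ex_path_le_card[OF fE] k by simp
  also have "card E = card (E \<inter> all_edges N)" using E by (simp add: Int_absorb2)
  finally show "real (ex_path E k) \<le> p * real N ^ 2" using edges expected_edges_le by linarith
  have "card (E \<inter> edges_on ?A) \<le> ex_path E k + card {c\<in>cherries ?A. cherry_edges c \<subseteq> E}"
    using edges_minus_cherries_le_ex_path[OF fE k finite_core_vertices[of N]] by arith
  then have "real (card (E \<inter> edges_on ?A)) - real (card {c\<in>cherries ?A. cherry_edges c \<subseteq> E})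
      \<le> real (ex_path E k)"
    by (simp add: of_nat_le_iff[symmetric] del: of_nat_le_iff)
  moreover have "real (card (edges_on ?A)) * p = ?m * (?m - 1) * p / 2"
    by (simp add: card_edges_on finite_core_vertices real_choose_two)
  moreover have "real (card (cherries ?A)) * p\<^sup>2 \<le> ?m ^ 3 * p\<^sup>2 / 2"
    using mult_right_mono[OF real_card_cherries_le[OF finite_core_vertices[of N]] zero_le_power2[of p]]
    by simp
  moreover have "p * real N ^ 2 / 15 \<le> ?m * (?m - 1) * p / 2 - ?m ^ 3 * p\<^sup>2 / 2 - 2 * (p * real N ^ 2 / 540)"
    using N_ge p_pos p_times_N_le_1 by (intro edges_minus_cherries_margin) (auto simp: card_core_vertices)
  ultimately show "p * real N ^ 2 / 15 \<le> real (ex_path E k)"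
    using core_edges core_cherries by linarith
qed

lemma gnp_prob_edge_count_atypical_le:
  "gnp_prob N p
      (\<lambda>E. p * real N ^ 2 / 2 \<le> \<bar>real (card (E \<inter> all_edges N)) - real (card (all_edges N)) * p\<bar>)
    \<le> 2 / (p * real N ^ 2)"
proof -
  have "gnp_prob N p
      (\<lambda>E. p * real N ^ 2 / 2 \<le> \<bar>real (card (E \<inter> all_edges N)) - real (card (all_edges N)) * p\<bar>)
    \<le> real (card (all_edges N)) * p / (p * real N ^ 2 / 2)\<^sup>2"
    using p_pos p_le_1 N_ge by (intro gnp_prob_edge_count_deviation_le) auto
  also have "\<dots> \<le> (1 / 2) * 2\<^sup>2 / (p * real N ^ 2)"
    using expected_edges_le by (intro le_mult_imp_div_square_le) simp
  finally show ?thesis by simp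
qed

lemma gnp_prob_core_edge_count_atypical_le:
  "gnp_prob N p (\<lambda>E. p * real N ^ 2 / 540 \<le> \<bar>real (card (E \<inter> edges_on (core_vertices N)))
        - real (card (edges_on (core_vertices N))) * p\<bar>)
    \<le> 540\<^sup>2 / (p * real N ^ 2)"
proof -
  have "gnp_prob N p (\<lambda>E. p * real N ^ 2 / 540 \<le> \<bar>real (card (E \<inter> edges_on (core_vertices N)))
        - real (card (edges_on (core_vertices N))) * p\<bar>)
    \<le> real (card (edges_on (core_vertices N))) * p / (p * real N ^ 2 / 540)\<^sup>2"
    using p_pos p_le_1 N_ge core_vertices_subset
    by (intro gnp_prob_edge_count_deviation_le edges_on_subset_all_edges) auto
  also have "\<dots> \<le> 1 * 540\<^sup>2 / (p * real N ^ 2)"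
    using expected_core_edges_le by (intro le_mult_imp_div_square_le) simp
  finally show ?thesis by simp
qed

lemma gnp_prob_core_cherry_count_atypical_le:
  "gnp_prob N p (\<lambda>E. p * real N ^ 2 / 540
        \<le> \<bar>real (card {c\<in>cherries (core_vertices N). cherry_edges c \<subseteq> E})
          - real (card (cherries (core_vertices N))) * p\<^sup>2\<bar>)
    \<le> 5 * 540\<^sup>2 / (p * real N ^ 2)"
proof -
  have "gnp_prob N p (\<lambda>E. p * real N ^ 2 / 540
        \<le> \<bar>real (card {c\<in>cherries (core_vertices N). cherry_edges c \<subseteq> E})
          - real (card (cherries (core_vertices N))) * p\<^sup>2\<bar>)
    \<le> real (card (cherries (core_vertices N)))
        * (p\<^sup>2 + 4 * real (card (core_vertices N)) * p ^ 3) / (p * real N ^ 2 / 540)\<^sup>2"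
    using p_pos p_le_1 N_ge finite_core_vertices core_vertices_subset
    by (intro gnp_prob_cherry_count_deviation_le) auto
  also have "\<dots> \<le> 5 * 540\<^sup>2 / (p * real N ^ 2)"
    using cherry_variance_le by (rule le_mult_imp_div_square_le)
  finally show ?thesis .
qed

lemma gnp_prob_ex_path_bounds_ge:
  assumes k: "3 \<le> k"
  shows "1 - (2 + 6 * 540\<^sup>2) / (p * real N ^ 2)
    \<le> gnp_prob N p (\<lambda>E. p * real N ^ 2 / 15 \<le> real (ex_path E k) \<and> real (ex_path E k) \<le> p * real N ^ 2)"
proof -
  define x where "x = p * real N ^ 2"
  define A where "A = core_vertices N"
  define bad_edges where "bad_edges E \<longleftrightarrow>
    x / 2 \<le> \<bar>real (card (E \<inter> all_edges N)) - real (card (all_edges N)) * p\<bar>" for E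
  define bad_core_edges where "bad_core_edges E \<longleftrightarrow>
    x / 540 \<le> \<bar>real (card (E \<inter> edges_on A)) - real (card (edges_on A)) * p\<bar>" for E
  define bad_cherries where "bad_cherries E \<longleftrightarrow>
    x / 540 \<le> \<bar>real (card {c\<in>cherries A. cherry_edges c \<subseteq> E}) - real (card (cherries A)) * p\<^sup>2\<bar>" for E
  have p: "0 \<le> p" "p \<le> 1" using p_pos p_le_1 by auto
  have "gnp_prob N p (\<lambda>E. bad_edges E \<or> bad_core_edges E \<or> bad_cherries E)
      \<le> gnp_prob N p bad_edges + (gnp_prob N p bad_core_edges + gnp_prob N p bad_cherries)"
    using gnp_prob_disj_le[OF p, of N bad_edges "\<lambda>E. bad_core_edges E \<or> bad_cherries E"]
      gnp_prob_disj_le[OF p, of N bad_core_edges bad_cherries]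
    by linarith
  also have "\<dots> \<le> 2 / x + (540\<^sup>2 / x + 5 * 540\<^sup>2 / x)"
    using gnp_prob_edge_count_atypical_le gnp_prob_core_edge_count_atypical_le
      gnp_prob_core_cherry_count_atypical_le
    unfolding bad_edges_def bad_core_edges_def bad_cherries_def x_def A_def
    by (intro add_mono) auto
  finally have "1 - (2 + 6 * 540\<^sup>2) / x
      \<le> gnp_prob N p (\<lambda>E. \<not> (bad_edges E \<or> bad_core_edges E \<or> bad_cherries E))"
    unfolding gnp_prob_compl by (simp add: field_simps)
  also have "\<dots> \<le> gnp_prob N p
      (\<lambda>E. p * real N ^ 2 / 15 \<le> real (ex_path E k) \<and> real (ex_path E k) \<le> p * real N ^ 2)"
    using p k unfolding bad_edges_def bad_core_edges_def bad_cherries_def x_def A_def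
    by (intro gnp_prob_mono ex_path_bounds_if_counts_typical) (auto simp: not_le)
  finally show ?thesis unfolding x_def .
qed

end

lemma tendsto_one_if_deficit_le:
  fixes x g :: "nat \<Rightarrow> real"
  assumes x: "filterlim x at_top sequentially"
    and bounds: "eventually (\<lambda>N. 1 - K / x N \<le> g N \<and> g N \<le> 1) sequentially"
  shows "g \<longlonglongrightarrow> 1"
proof (rule tendsto_sandwich[where f="\<lambda>N. 1 - K / x N" and h="\<lambda>N. 1"])
  show "eventually (\<lambda>N. 1 - K / x N \<le> g N) sequentially"
    "eventually (\<lambda>N. g N \<le> 1) sequentially"
    using bounds by (auto elim: eventually_mono)
  have "(\<lambda>N. 1 - K * inverse (x N)) \<longlonglongrightarrow> 1 - K * 0"
    by (intro tendsto_intros tendsto_inverse_0_at_top x)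
  then show "(\<lambda>N. 1 - K / x N) \<longlonglongrightarrow> 1" by (simp add: divide_inverse)
qed simp

lemma gnp_prob_ex_path_bounds_tendsto_1:
  fixes k :: "nat \<Rightarrow> nat" and p :: "nat \<Rightarrow> real"
  assumes k: "\<And>N. 3 \<le> k N" and p: "\<And>N. p N \<le> 1 / real N"
    and x: "filterlim (\<lambda>N. p N * real N ^ 2) at_top sequentially"
  shows "(\<lambda>N. gnp_prob N (p N) (\<lambda>E. p N * real N ^ 2 / 15 \<le> real (ex_path E (k N))
      \<and> real (ex_path E (k N)) \<le> p N * real N ^ 2)) \<longlonglongrightarrow> 1"
proof (rule tendsto_one_if_deficit_le[OF x])
  have "eventually (\<lambda>N. 0 < p N * real N ^ 2) sequentially"
    using x by (simp add: filterlim_at_top_dense)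
  then show "eventually (\<lambda>N. 1 - (2 + 6 * 540\<^sup>2) / (p N * real N ^ 2)
      \<le> gnp_prob N (p N) (\<lambda>E. p N * real N ^ 2 / 15 \<le> real (ex_path E (k N))
          \<and> real (ex_path E (k N)) \<le> p N * real N ^ 2)
      \<and> gnp_prob N (p N) (\<lambda>E. p N * real N ^ 2 / 15 \<le> real (ex_path E (k N))
          \<and> real (ex_path E (k N)) \<le> p N * real N ^ 2) \<le> 1) sequentially"
    using eventually_ge_at_top[of 175]
  proof eventually_elim
    case (elim N)
    then have "0 < p N" by (simp add: zero_less_mult_iff)
    with elim(2) p[of N] show ?case
      using gnp_prob_ex_path_bounds_ge[OF _ _ _ k] gnp_prob_le_1 p_le_1 by auto
  qed
qed

theorem proposition1p3:
  shows
  "(\<exists>c1 c2 :: real. c1 > 0 \<and> c2 > 0 \<and>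
     (\<forall>(n :: nat \<Rightarrow> nat) (p :: nat \<Rightarrow> real).
        (\<forall>N. n N \<ge> 2) \<and> (\<forall>N. 0 \<le> p N \<and> p N \<le> 1 / real N) \<and>
        filterlim (\<lambda>N. p N * real N ^ 2) at_top sequentially \<longrightarrow>
        (\<lambda>N. gnp_prob N (p N)
               (\<lambda>E. c1 * p N * real N ^ 2 \<le> real (ex_path E (n N + 1)) \<and>
                    real (ex_path E (n N + 1)) \<le> c2 * p N * real N ^ 2))
          \<longlonglongrightarrow> 1))
   \<and>
   (\<forall>n :: nat \<Rightarrow> nat. (\<forall>N. n N \<ge> 2) \<longrightarrow>
      (\<lambda>N. gnp_prob N (1 / real N)
             (\<lambda>E. real (ex_path E (n N + 1)) \<ge> real N / 15))
        \<longlonglongrightarrow> 1)"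
proof ((rule conjI, rule exI[of _ "1 / 15"], rule exI[of _ 1]); intro conjI allI impI)
  fix n :: "nat \<Rightarrow> nat" and p :: "nat \<Rightarrow> real"
  assume "(\<forall>N. n N \<ge> 2) \<and> (\<forall>N. 0 \<le> p N \<and> p N \<le> 1 / real N) \<and>
    filterlim (\<lambda>N. p N * real N ^ 2) at_top sequentially"
  then have "(\<lambda>N. gnp_prob N (p N) (\<lambda>E. p N * real N ^ 2 / 15 \<le> real (ex_path E (n N + 1))
      \<and> real (ex_path E (n N + 1)) \<le> p N * real N ^ 2)) \<longlonglongrightarrow> 1"
    by (intro gnp_prob_ex_path_bounds_tendsto_1) (auto simp: numeral_3_eq_3 numeral_2_eq_2)
  then show "(\<lambda>N. gnp_prob N (p N) (\<lambda>E. 1 / 15 * p N * real N ^ 2 \<le> real (ex_path E (n N + 1))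
      \<and> real (ex_path E (n N + 1)) \<le> 1 * p N * real N ^ 2)) \<longlonglongrightarrow> 1"
    by simp
next
  fix n :: "nat \<Rightarrow> nat"
  assume "\<forall>N. n N \<ge> 2"
  moreover have N_eq: "1 / real N * real N ^ 2 = real N" for N
    by (simp add: power2_eq_square)
  ultimately have lim: "(\<lambda>N. gnp_prob N (1 / real N) (\<lambda>E. real N / 15 \<le> real (ex_path E (n N + 1))
      \<and> real (ex_path E (n N + 1)) \<le> real N)) \<longlonglongrightarrow> 1"
    using gnp_prob_ex_path_bounds_tendsto_1[of "\<lambda>N. n N + 1" "\<lambda>N. 1 / real N"]
    by (simp add: N_eq filterlim_real_sequentially numeral_3_eq_3 numeral_2_eq_2)
  have "1 / real N \<le> 1" for N by (cases N) auto
  then show "(\<lambda>N. gnp_prob N (1 / real N) (\<lambda>E. real (ex_path E (n N + 1)) \<ge> real N / 15)) \<longlonglongrightarrow> 1"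
    by (intro tendsto_sandwich[OF _ _ lim tendsto_const] always_eventually allI gnp_prob_mono gnp_prob_le_1)
      auto
qed simp_all

end
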